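(* Let $M$ be a $C^2$ manifold with a Koszul connection $\nabla$ (on $TM$, extended to tensor fields by the Leibniz rule), and let $A$ be a $C^2$ covariant symmetric tensor field on $M$ of some rank that vanishes at no point of $M$. If $\nabla\big(\mathrm{Sym}(A\otimes A)\big)=0$ everywhere on $M$, then $\nabla A=0$ everywhere on $M$.
   Context: $\mathrm{Sym}$ denotes symmetrization of covariant tensors: $\mathrm{Sym}(C)=\frac1{k!}\sum_{\sigma\in P(k)}\sigma(C)$ with $(\sigma C)(v_1,\dots,v_k)=C(v_{\sigma(1)},\dots,v_{\sigma(k)})$. *)

theory Defs
  imports "HOL-Analysis.Analysis"
begin

text \<open>Local-coordinate model. Points of a chart domain U (open in real^'n).
A covariant tensor field T of rank r is given by its components
T x js = T_x(e_{js!0},...,e_{js!(r-1)}) for index lists js of length r.\<close>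

definition C2_on :: "('a::euclidean_space) set \<Rightarrow> ('a \<Rightarrow> real) \<Rightarrow> bool" where
  "C2_on U f \<longleftrightarrow> (\<exists>Df D2f.
      (\<forall>x\<in>U. (f has_derivative Df x) (at x)) \<and>
      (\<forall>x\<in>U. \<forall>v. ((\<lambda>y. Df y v) has_derivative D2f x v) (at x)) \<and>
      (\<forall>v w. continuous_on U (\<lambda>x. D2f x v w)))"

definition partial_deriv :: "(real^'n \<Rightarrow> real) \<Rightarrow> 'n \<Rightarrow> real^'n \<Rightarrow> real" where
  "partial_deriv f i x = deriv (\<lambda>t. f (x + t *\<^sub>R axis i 1)) 0"

definition tensor_prod :: "nat \<Rightarrow> ('n list \<Rightarrow> real) \<Rightarrow> ('n list \<Rightarrow> real) \<Rightarrow> 'n list \<Rightarrow> real" where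
  "tensor_prod r S T js = S (take r js) * T (drop r js)"

definition perm_idx :: "nat \<Rightarrow> (nat \<Rightarrow> nat) \<Rightarrow> 'n list \<Rightarrow> 'n list" where
  "perm_idx r \<sigma> js = map (\<lambda>i. js ! \<sigma> i) [0..<r]"

definition Sym :: "nat \<Rightarrow> ('n list \<Rightarrow> real) \<Rightarrow> 'n list \<Rightarrow> real" where
  "Sym r C js = (1 / fact r) * (\<Sum>\<sigma>\<in>{\<sigma>. \<sigma> permutes {..<r}}. C (perm_idx r \<sigma> js))"

definition symmetric_tensor :: "nat \<Rightarrow> ('n list \<Rightarrow> real) \<Rightarrow> bool" where
  "symmetric_tensor r C \<longleftrightarrow> (\<forall>js \<sigma>. length js = r \<longrightarrow> \<sigma> permutes {..<r} \<longrightarrow> C (perm_idx r \<sigma> js) = C js)"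

text \<open>Koszul connection in coordinates: nabla_{d_i} d_j = sum_l Gamma x i j l d_l.\<close>
definition cov_deriv :: "(real^'n \<Rightarrow> 'n \<Rightarrow> 'n \<Rightarrow> 'n \<Rightarrow> real) \<Rightarrow> (real^'n \<Rightarrow> 'n list \<Rightarrow> real)
      \<Rightarrow> real^'n \<Rightarrow> 'n \<Rightarrow> 'n list \<Rightarrow> real" where
  "cov_deriv \<Gamma> T x i js = partial_deriv (\<lambda>y. T y js) i x
      - (\<Sum>m<length js. \<Sum>l\<in>UNIV. \<Gamma> x i (js ! m) l * T x (js[m := l]))"

end

theory Submission
  imports Defs "HOL-Combinatorics.Permutations"
begin

text \<open>
  Identify a covariant r-tensor T with its polynomial P_T(v) = T(v, ..., v). Symmetrization
  does not change P_T, and P_(A (x) A) = P_A^2, so P_Sym(A (x) A) = P_A^2. Along a coordinate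
  line, the polynomial of the covariant derivative nabla_i T is the derivative of P_T minus a
  connection term that acts on P_T as a derivation in v; hence
  P_(nabla_i Sym(A (x) A)) = 2 P_A P_(nabla_i A), and the hypothesis makes this product vanish
  identically. As A is symmetric and nonzero, P_A is nonzero on a nonempty open set, where
  P_(nabla_i A) must then vanish. Finally nabla_i A is symmetric, and a symmetric tensor whose
  polynomial vanishes on an open set is zero: differentiating in a direction u gives, by
  polarization, the polynomial of the contraction of the tensor with u, so induction on the
  rank applies.
\<close>

definition tensor_apply :: "nat \<Rightarrow> ('n::finite list \<Rightarrow> real) \<Rightarrow> (nat \<Rightarrow> real^'n) \<Rightarrow> real" where
  "tensor_apply r T vs = (\<Sum>js | length js = r. T js * (\<Prod>p<r. vs p $ (js ! p)))"

abbreviation tensor_poly :: "nat \<Rightarrow> ('n::finite list \<Rightarrow> real) \<Rightarrow> real^'n \<Rightarrow> real" where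
  "tensor_poly r T v \<equiv> tensor_apply r T (\<lambda>_. v)"

definition tensor_poly_deriv :: "nat \<Rightarrow> ('n::finite list \<Rightarrow> real) \<Rightarrow> real^'n \<Rightarrow> real^'n \<Rightarrow> real" where
  "tensor_poly_deriv r T v w = (\<Sum>m<r. tensor_apply r T ((\<lambda>_. v)(m := w)))"

lemma finite_lists_length_eq_UNIV [simp]: "finite {js :: 'n::finite list. length js = r}"
  using finite_lists_length_eq[of "UNIV :: 'n set" r] by simp

lemma tensor_apply_eq_0:
  assumes "\<And>js. length js = r \<Longrightarrow> T js = 0"
  shows "tensor_apply r T vs = 0"
  using assms unfolding tensor_apply_def by (intro sum.neutral) auto

lemma tensor_apply_diff:
  "tensor_apply r (\<lambda>js. S js - T js) vs = tensor_apply r S vs - tensor_apply r T vs"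
  unfolding tensor_apply_def by (simp add: left_diff_distrib sum_subtractf)

lemma tensor_apply_0: "tensor_apply 0 T vs = T []"
proof -
  have "{js. length js = 0} = {[]}" by auto
  then show ?thesis by (simp add: tensor_apply_def)
qed

section \<open>Symmetrization and tensor products\<close>

lemma length_perm_idx [simp]: "length (perm_idx r \<sigma> js) = r"
  by (simp add: perm_idx_def)

lemma nth_perm_idx [simp]: "p < r \<Longrightarrow> perm_idx r \<sigma> js ! p = js ! \<sigma> p"
  by (simp add: perm_idx_def)

lemma perm_idx_inv:
  assumes "\<sigma> permutes {..<r}" "length js = r"
  shows "perm_idx r (inv \<sigma>) (perm_idx r \<sigma> js) = js"
  using assms permutes_inverses[OF assms(1)] permutes_in_image[OF permutes_inv[OF assms(1)]]
  by (auto intro!: nth_equalityI)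

lemma bij_betw_perm_idx:
  assumes "\<sigma> permutes {..<r}"
  shows "bij_betw (perm_idx r \<sigma>) {js. length js = r} {js. length js = r}"
  by (rule bij_betw_byWitness[where f'="perm_idx r (inv \<sigma>)"])
     (use assms perm_idx_inv[OF assms] perm_idx_inv[OF permutes_inv[OF assms]] in
       \<open>auto simp: permutes_inv_inv\<close>)

lemma tensor_apply_perm_idx:
  assumes \<sigma>: "\<sigma> permutes {..<r}"
  shows "tensor_apply r (\<lambda>js. T (perm_idx r \<sigma> js)) vs = tensor_apply r T (vs \<circ> \<sigma>)"
proof -
  have "(\<Prod>p<r. vs p $ (js ! p)) = (\<Prod>q<r. vs (\<sigma> q) $ (perm_idx r \<sigma> js ! q))" for js
    using prod.permute[OF \<sigma>, of "\<lambda>p. vs p $ (js ! p)"] by simp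
  then show ?thesis
    unfolding tensor_apply_def
    using sum.reindex_bij_betw[OF bij_betw_perm_idx[OF \<sigma>],
        of "\<lambda>js. T js * (\<Prod>q<r. vs (\<sigma> q) $ (js ! q))"]
    by simp
qed

lemma tensor_apply_symmetric_perm:
  assumes "symmetric_tensor r T" "\<sigma> permutes {..<r}"
  shows "tensor_apply r T (vs \<circ> \<sigma>) = tensor_apply r T vs"
proof -
  have "tensor_apply r T (vs \<circ> \<sigma>) = tensor_apply r (\<lambda>js. T (perm_idx r \<sigma> js)) vs"
    by (rule tensor_apply_perm_idx[symmetric, OF assms(2)])
  also have "\<dots> = tensor_apply r T vs"
    using assms unfolding tensor_apply_def symmetric_tensor_def by (intro sum.cong) auto
  finally show ?thesis .
qed

lemma tensor_poly_Sym: "tensor_poly r (Sym r C) v = tensor_poly r C v"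
proof -
  have "tensor_poly r (Sym r C) v
      = (1 / fact r) * (\<Sum>\<sigma> | \<sigma> permutes {..<r}. tensor_apply r (\<lambda>js. C (perm_idx r \<sigma> js)) (\<lambda>_. v))"
    unfolding tensor_apply_def Sym_def
    by (simp add: sum_distrib_left sum_distrib_right sum.swap[of _ "{js. length js = r}"] mult.assoc)
  also have "\<dots> = (1 / fact r) * (\<Sum>\<sigma> | \<sigma> permutes {..<r}. tensor_poly r C v)"
    by (simp add: tensor_apply_perm_idx comp_def)
  also have "\<dots> = tensor_poly r C v"
    by (simp add: card_permutations)
  finally show ?thesis .
qed

lemma prod_lessThan_add:
  "(\<Prod>p<r + s. f p) = (\<Prod>p<r. f p) * (\<Prod>p<s. f (r + p))" for f :: "nat \<Rightarrow> 'a::comm_monoid_mult"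
  by (induction s) (simp_all add: mult.assoc)

lemma tensor_apply_tensor_prod:
  "tensor_apply (r + s) (tensor_prod r S T) vs = tensor_apply r S vs * tensor_apply s T (\<lambda>p. vs (r + p))"
proof -
  have "tensor_apply r S vs * tensor_apply s T (\<lambda>p. vs (r + p))
      = (\<Sum>(xs, ys)\<in>{xs. length xs = r} \<times> {ys. length ys = s}.
           S xs * T ys * ((\<Prod>p<r. vs p $ (xs ! p)) * (\<Prod>p<s. vs (r + p) $ (ys ! p))))"
    unfolding tensor_apply_def by (simp add: sum_product sum.cartesian_product mult_ac)
  also have "\<dots> = tensor_apply (r + s) (tensor_prod r S T) vs"
    unfolding tensor_apply_def tensor_prod_def
    by (rule sum.reindex_bij_witness[where i="\<lambda>js. (take r js, drop r js)" and j="\<lambda>(xs, ys). xs @ ys"])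
       (auto simp: prod_lessThan_add nth_append)
  finally show ?thesis by simp
qed

lemma tensor_poly_Sym_square:
  "tensor_poly (2 * k) (Sym (2 * k) (tensor_prod k T T)) v = (tensor_poly k T v)\<^sup>2"
  using tensor_apply_tensor_prod[of k k T T "\<lambda>_. v"] by (simp add: tensor_poly_Sym mult_2 power2_eq_square)

section \<open>Derivatives of the tensor polynomial\<close>

lemma prod_update_slot:
  assumes "m < r"
  shows "(\<Prod>p<r. (vs(m := w)) p $ (js ! p)) = w $ (js ! m) * (\<Prod>p\<in>{..<r} - {m}. vs p $ (js ! p))"
proof -
  have "(\<Prod>p\<in>{..<r} - {m}. (vs(m := w)) p $ (js ! p)) = (\<Prod>p\<in>{..<r} - {m}. vs p $ (js ! p))"
    by (rule prod.cong) auto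
  then show ?thesis
    using prod.remove[of "{..<r}" m "\<lambda>p. (vs(m := w)) p $ (js ! p)"] assms by simp
qed

lemma tensor_poly_has_real_derivative:
  fixes T :: "'n::finite list \<Rightarrow> real"
  shows "((\<lambda>t. tensor_poly r T (v + t *\<^sub>R w)) has_real_derivative tensor_poly_deriv r T v w) (at 0)"
proof -
  have "((\<lambda>t. \<Prod>p<r. (v + t *\<^sub>R w) $ (js ! p)) has_real_derivative
          (\<Sum>m<r. \<Prod>p<r. ((\<lambda>_. v)(m := w)) p $ (js ! p))) (at 0)" for js :: "'n list"
  proof -
    have "((\<lambda>t. (v + t *\<^sub>R w) $ j) has_real_derivative w $ j) (at 0)" for j
      by (auto intro!: derivative_eq_intros)
    then have "((\<lambda>t. \<Prod>p<r. (v + t *\<^sub>R w) $ (js ! p)) has_real_derivative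
          (\<Sum>m<r. w $ (js ! m) * (\<Prod>p\<in>{..<r} - {m}. v $ (js ! p)))) (at 0)"
      using has_field_derivative_prod[of "{..<r}" "\<lambda>p t. (v + t *\<^sub>R w) $ (js ! p)" "\<lambda>p. w $ (js ! p)" 0]
      by simp
    also have "(\<Sum>m<r. w $ (js ! m) * (\<Prod>p\<in>{..<r} - {m}. v $ (js ! p)))
             = (\<Sum>m<r. \<Prod>p<r. ((\<lambda>_. v)(m := w)) p $ (js ! p))"
      by (intro sum.cong refl) (subst prod_update_slot, auto)
    finally show ?thesis .
  qed
  then have "((\<lambda>t. tensor_poly r T (v + t *\<^sub>R w)) has_real_derivative
      (\<Sum>js | length js = r. T js * (\<Sum>m<r. \<Prod>p<r. ((\<lambda>_. v)(m := w)) p $ (js ! p)))) (at 0)"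
    unfolding tensor_apply_def by (intro DERIV_sum DERIV_cmult)
  then show ?thesis
    unfolding tensor_poly_deriv_def tensor_apply_def sum_distrib_left by (subst sum.swap)
qed

lemma tensor_poly_deriv_Sym_square:
  "tensor_poly_deriv (2 * k) (Sym (2 * k) (tensor_prod k T T)) v w
     = 2 * tensor_poly k T v * tensor_poly_deriv k T v w"
proof -
  have "((\<lambda>t. (tensor_poly k T (v + t *\<^sub>R w))\<^sup>2) has_real_derivative
          2 * tensor_poly k T v * tensor_poly_deriv k T v w) (at 0)"
    by (auto intro!: derivative_eq_intros tensor_poly_has_real_derivative)
  then show ?thesis
    using tensor_poly_has_real_derivative[of "2 * k" "Sym (2 * k) (tensor_prod k T T)" v w]
    by (simp add: tensor_poly_Sym_square DERIV_unique)
qed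

lemma tensor_apply_connection_slot:
  fixes T :: "'n::finite list \<Rightarrow> real"
  assumes m: "m < r"
  shows "(\<Sum>js | length js = r. (\<Sum>l\<in>UNIV. G (js ! m) l * T (js[m := l])) * (\<Prod>p<r. vs p $ (js ! p)))
       = tensor_apply r T (vs(m := \<chi> l. \<Sum>a\<in>UNIV. G a l * vs m $ a))"
proof -
  let ?rest = "\<lambda>js. \<Prod>p\<in>{..<r} - {m}. vs p $ (js ! p)"
  have rest_update: "?rest (js[m := l]) = ?rest js" for js l
    by (rule prod.cong) auto
  have "(\<Sum>js | length js = r. (\<Sum>l\<in>UNIV. G (js ! m) l * T (js[m := l])) * (\<Prod>p<r. vs p $ (js ! p)))
      = (\<Sum>(js, l)\<in>{js. length js = r} \<times> UNIV. G (js ! m) l * T (js[m := l]) * (vs m $ (js ! m) * ?rest js))"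
    using prod_update_slot[OF m, of vs "vs m"]
    by (simp add: sum.cartesian_product[symmetric] sum_distrib_right)
  also have "\<dots> = (\<Sum>(js, a)\<in>{js. length js = r} \<times> UNIV. G a (js ! m) * T js * (vs m $ a * ?rest js))"
    by (rule sum.reindex_bij_witness[where i="\<lambda>(js, l). (js[m := l], js ! m)" and j="\<lambda>(js, l). (js[m := l], js ! m)"])
       (use m rest_update in auto)
  also have "\<dots> = tensor_apply r T (vs(m := \<chi> l. \<Sum>a\<in>UNIV. G a l * vs m $ a))"
    unfolding tensor_apply_def prod_update_slot[OF m]
    by (simp add: sum.cartesian_product[symmetric] sum_distrib_left sum_distrib_right mult_ac)
  finally show ?thesis .
qed

lemma tensor_poly_connection:
  fixes T :: "'n::finite list \<Rightarrow> real"
  shows "tensor_poly r (\<lambda>js. \<Sum>m<length js. \<Sum>l\<in>UNIV. G (js ! m) l * T (js[m := l])) v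
       = tensor_poly_deriv r T v (\<chi> l. \<Sum>a\<in>UNIV. G a l * v $ a)"
proof -
  have "tensor_poly r (\<lambda>js. \<Sum>m<length js. \<Sum>l\<in>UNIV. G (js ! m) l * T (js[m := l])) v
      = (\<Sum>m<r. \<Sum>js | length js = r. (\<Sum>l\<in>UNIV. G (js ! m) l * T (js[m := l])) * (\<Prod>p<r. v $ (js ! p)))"
    unfolding tensor_apply_def sum_distrib_right by (subst sum.swap) simp
  also have "\<dots> = tensor_poly_deriv r T v (\<chi> l. \<Sum>a\<in>UNIV. G a l * v $ a)"
    unfolding tensor_poly_deriv_def by (intro sum.cong refl) (simp add: tensor_apply_connection_slot[where vs="\<lambda>_. v"])
  finally show ?thesis .
qed

section \<open>Symmetric tensors with vanishing polynomial\<close>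

definition contract_first :: "real^'n \<Rightarrow> ('n::finite list \<Rightarrow> real) \<Rightarrow> 'n list \<Rightarrow> real" where
  "contract_first u T js = (\<Sum>a\<in>UNIV. u $ a * T (a # js))"

lemma tensor_apply_Suc:
  "tensor_apply (Suc r) T vs = tensor_apply r (contract_first (vs 0) T) (vs \<circ> Suc)"
proof -
  have "tensor_apply (Suc r) T vs = (\<Sum>(a, js)\<in>UNIV \<times> {js. length js = r}. T (a # js) * (vs 0 $ a * (\<Prod>p<r. vs (Suc p) $ (js ! p))))"
    unfolding tensor_apply_def
    by (rule sum.reindex_bij_witness[where i="\<lambda>(a, js). a # js" and j="\<lambda>js. (hd js, tl js)"])
       (auto simp: length_Suc_conv prod.lessThan_Suc_shift simp del: prod.lessThan_Suc)
  also have "\<dots> = tensor_apply r (contract_first (vs 0) T) (vs \<circ> Suc)"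
    unfolding tensor_apply_def contract_first_def sum.cartesian_product[symmetric]
    by (subst sum.swap) (simp add: sum_distrib_left mult_ac)
  finally show ?thesis .
qed

lemma permutes_lift_Suc:
  assumes "\<sigma> permutes {..<r}"
  shows "(\<lambda>i. case i of 0 \<Rightarrow> 0 | Suc j \<Rightarrow> Suc (\<sigma> j)) permutes {..<Suc r}"
proof (rule bij_imp_permutes)
  show "bij_betw (\<lambda>i. case i of 0 \<Rightarrow> 0 | Suc j \<Rightarrow> Suc (\<sigma> j)) {..<Suc r} {..<Suc r}"
    by (rule bij_betw_byWitness[where f'="\<lambda>i. case i of 0 \<Rightarrow> 0 | Suc j \<Rightarrow> Suc (inv \<sigma> j)"])
       (use assms permutes_inverses[OF assms] permutes_in_image[OF assms]
          permutes_in_image[OF permutes_inv[OF assms]] in \<open>auto split: nat.splits\<close>)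
qed (use permutes_not_in[OF assms] in \<open>auto split: nat.splits\<close>)

lemma symmetric_tensor_contract_first:
  assumes "symmetric_tensor (Suc r) T"
  shows "symmetric_tensor r (contract_first u T)"
  unfolding symmetric_tensor_def
proof (intro allI impI)
  fix js :: "'a list" and \<sigma>
  assume js: "length js = r" and \<sigma>: "\<sigma> permutes {..<r}"
  have "a # perm_idx r \<sigma> js = perm_idx (Suc r) (\<lambda>i. case i of 0 \<Rightarrow> 0 | Suc j \<Rightarrow> Suc (\<sigma> j)) (a # js)" for a
    by (rule nth_equalityI) (auto simp: nth_Cons split: nat.splits)
  then have "T (a # perm_idx r \<sigma> js) = T (a # js)" for a
    using assms permutes_lift_Suc[OF \<sigma>] js unfolding symmetric_tensor_def by (metis length_Cons)
  then show "contract_first u T (perm_idx r \<sigma> js) = contract_first u T js"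
    by (simp add: contract_first_def)
qed

lemma tensor_poly_deriv_symmetric:
  assumes "symmetric_tensor (Suc r) T"
  shows "tensor_poly_deriv (Suc r) T v u = Suc r * tensor_poly r (contract_first u T) v"
proof -
  have "tensor_apply (Suc r) T ((\<lambda>_. v)(m := u)) = tensor_poly r (contract_first u T) v"
    if "m < Suc r" for m
  proof -
    have "(\<lambda>_. v)(m := u) = ((\<lambda>_. v)(0 := u)) \<circ> Transposition.transpose 0 m"
      by (auto simp: fun_eq_iff Transposition.transpose_def)
    moreover have "Transposition.transpose 0 m permutes {..<Suc r}"
      using that by (simp add: permutes_swap_id)
    ultimately have "tensor_apply (Suc r) T ((\<lambda>_. v)(m := u)) = tensor_apply (Suc r) T ((\<lambda>_. v)(0 := u))"
      using tensor_apply_symmetric_perm[OF assms] by simp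
    also have "\<dots> = tensor_poly r (contract_first u T) v"
      by (simp add: tensor_apply_Suc comp_def)
    finally show ?thesis .
  qed
  then show ?thesis
    by (simp add: tensor_poly_deriv_def)
qed

lemma eventually_nhds_line:
  fixes v u :: "'a::real_normed_vector"
  assumes "eventually P (nhds v)"
  shows "eventually (\<lambda>t. P (v + t *\<^sub>R u)) (nhds 0)"
proof -
  have "((\<lambda>t. v + t *\<^sub>R u) \<longlongrightarrow> v) (nhds 0)"
    using tendsto_at_iff_tendsto_nhds[of "\<lambda>t. v + t *\<^sub>R u" 0] by (auto intro!: tendsto_eq_intros)
  then show ?thesis
    using assms by (simp add: filterlim_iff)
qed

lemma symmetric_tensor_eq_0_if_poly_vanishes_on_open:
  fixes T :: "'n::finite list \<Rightarrow> real"
  assumes "symmetric_tensor r T" "open W" "v0 \<in> W" "\<And>v. v \<in> W \<Longrightarrow> tensor_poly r T v = 0"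
    and "length js = r"
  shows "T js = 0"
  using assms
proof (induction r arbitrary: T js)
  case 0
  then show ?case
    by (simp add: tensor_apply_0)
next
  case (Suc r)
  have "tensor_poly r (contract_first u T) v = 0" if "v \<in> W" for u v
  proof -
    have "eventually (\<lambda>t. tensor_poly (Suc r) T (v + t *\<^sub>R u) = 0) (nhds 0)"
      using eventually_nhds_line[OF eventually_nhds_in_open[OF \<open>open W\<close> that]] Suc.prems(4)
      by (rule eventually_mono)
    then have "((\<lambda>t. tensor_poly (Suc r) T (v + t *\<^sub>R u)) has_real_derivative 0) (at 0)"
      by (rule DERIV_cong_ev[THEN iffD2, OF refl _ refl]) (rule DERIV_const)
    then have "tensor_poly_deriv (Suc r) T v u = 0"
      using tensor_poly_has_real_derivative DERIV_unique by blast
    then show ?thesis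
      by (simp add: tensor_poly_deriv_symmetric[OF Suc.prems(1)])
  qed
  moreover obtain a js' where js: "js = a # js'" and "length js' = r"
    using Suc.prems(5) by (auto simp: length_Suc_conv)
  ultimately have "contract_first (axis a 1) T js' = 0"
    using Suc.IH[OF symmetric_tensor_contract_first[OF Suc.prems(1)] Suc.prems(2,3)] by blast
  moreover have "contract_first (axis a 1) T js' = T (a # js')"
    by (simp add: contract_first_def axis_def if_distrib[where f="\<lambda>x. x * _"] cong: if_cong)
  ultimately show ?case
    using js by simp
qed

lemma continuous_on_tensor_poly: "continuous_on UNIV (tensor_poly r T)"
  unfolding tensor_apply_def by (intro continuous_intros)

lemma symmetric_tensor_eq_0_if_poly_product_vanishes:
  fixes S T :: "'n::finite list \<Rightarrow> real"
  assumes "symmetric_tensor r S" "length is = r" "S is \<noteq> 0"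
    and "symmetric_tensor s T" "\<And>v. tensor_poly r S v * tensor_poly s T v = 0"
    and "length js = s"
  shows "T js = 0"
proof -
  obtain v0 where v0: "tensor_poly r S v0 \<noteq> 0"
    using symmetric_tensor_eq_0_if_poly_vanishes_on_open[OF assms(1) open_UNIV UNIV_I _ assms(2)] assms(3)
    by blast
  have "open {v. tensor_poly r S v \<noteq> 0}"
    by (intro open_Collect_neq continuous_on_tensor_poly continuous_on_const)
  then show ?thesis
    using symmetric_tensor_eq_0_if_poly_vanishes_on_open[OF assms(4) _ _ _ assms(6)] v0 assms(5)
    by (metis (mono_tags) mem_Collect_eq mult_eq_0_iff)
qed

section \<open>Covariant derivatives along coordinate lines\<close>

lemma C2_on_imp_differentiable:
  assumes "C2_on U f" "x \<in> U"
  shows "f differentiable (at x)"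
  using assms unfolding C2_on_def by (blast intro: differentiableI)

lemma differentiable_along_line:
  fixes f :: "'a::real_normed_vector \<Rightarrow> real"
  assumes "f differentiable (at x)"
  shows "(\<lambda>t. f (x + t *\<^sub>R v)) differentiable (at 0)"
proof (rule differentiable_compose[of f])
  show "f differentiable (at (x + 0 *\<^sub>R v))"
    using assms by simp
qed (auto intro!: derivative_intros)

lemma has_real_derivative_partial_deriv:
  assumes "(\<lambda>t. f (x + t *\<^sub>R axis i 1)) differentiable (at 0)"
  shows "((\<lambda>t. f (x + t *\<^sub>R axis i 1)) has_real_derivative partial_deriv f i x) (at 0)"
  using assms unfolding partial_deriv_def by (simp add: DERIV_deriv_iff_real_differentiable)

lemma tensor_poly_cov_deriv_has_real_derivative:
  fixes T :: "real^'n \<Rightarrow> 'n list \<Rightarrow> real"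
  assumes "\<And>js. (\<lambda>t. T (x + t *\<^sub>R axis i 1) js) differentiable (at 0)"
  shows "((\<lambda>t. tensor_poly r (T (x + t *\<^sub>R axis i 1)) v) has_real_derivative
           tensor_poly r (cov_deriv \<Gamma> T x i) v
           + tensor_poly_deriv r (T x) v (\<chi> l. \<Sum>a\<in>UNIV. \<Gamma> x i a l * v $ a)) (at 0)"
proof -
  have "((\<lambda>t. tensor_poly r (T (x + t *\<^sub>R axis i 1)) v) has_real_derivative
           tensor_poly r (\<lambda>js. partial_deriv (\<lambda>y. T y js) i x) v) (at 0)"
    unfolding tensor_apply_def
    by (intro DERIV_sum DERIV_cmult_right has_real_derivative_partial_deriv[of "\<lambda>y. T y _", OF assms])
  moreover have "tensor_poly r (cov_deriv \<Gamma> T x i) v = tensor_poly r (\<lambda>js. partial_deriv (\<lambda>y. T y js) i x) v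
      - tensor_poly_deriv r (T x) v (\<chi> l. \<Sum>a\<in>UNIV. \<Gamma> x i a l * v $ a)"
    unfolding cov_deriv_def tensor_apply_diff tensor_poly_connection ..
  ultimately show ?thesis
    by simp
qed

lemma perm_idx_list_update:
  assumes "\<sigma> permutes {..<r}" "m < r" "length js = r"
  shows "(perm_idx r \<sigma> js)[m := l] = perm_idx r \<sigma> (js[\<sigma> m := l])"
proof (rule nth_equalityI)
  fix p
  assume "p < length ((perm_idx r \<sigma> js)[m := l])"
  then have "p < r" by simp
  moreover have "\<sigma> m = \<sigma> p \<longleftrightarrow> m = p"
    using permutes_inj[OF assms(1)] by (auto dest: injD)
  moreover have "\<sigma> m < r"
    using permutes_in_image[OF assms(1)] assms(2) by simp
  ultimately show "(perm_idx r \<sigma> js)[m := l] ! p = perm_idx r \<sigma> (js[\<sigma> m := l]) ! p"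
    using assms(3) by (simp add: nth_list_update)
qed simp

lemma symmetric_tensor_cov_deriv:
  fixes T :: "real^'n \<Rightarrow> 'n list \<Rightarrow> real"
  assumes sym: "eventually (\<lambda>y. symmetric_tensor r (T y)) (nhds x)"
  shows "symmetric_tensor r (cov_deriv \<Gamma> T x i)"
  unfolding symmetric_tensor_def
proof (intro allI impI)
  fix js :: "'n list" and \<sigma>
  assume js: "length js = r" and \<sigma>: "\<sigma> permutes {..<r}"
  have sym_x: "symmetric_tensor r (T x)"
    using sym by (rule eventually_nhds_x_imp_x)
  have "eventually (\<lambda>t. T (x + t *\<^sub>R axis i 1) (perm_idx r \<sigma> js) = T (x + t *\<^sub>R axis i 1) js) (nhds 0)"
    using eventually_nhds_line[OF sym, where u="axis i 1"] by eventually_elim (use js \<sigma> in \<open>simp add: symmetric_tensor_def\<close>)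
  then have "partial_deriv (\<lambda>y. T y (perm_idx r \<sigma> js)) i x = partial_deriv (\<lambda>y. T y js) i x"
    unfolding partial_deriv_def by (rule deriv_cong_ev) simp
  moreover have "(\<Sum>m<r. \<Sum>l\<in>UNIV. \<Gamma> x i (perm_idx r \<sigma> js ! m) l * T x ((perm_idx r \<sigma> js)[m := l]))
      = (\<Sum>m<r. \<Sum>l\<in>UNIV. \<Gamma> x i (js ! \<sigma> m) l * T x (js[\<sigma> m := l]))"
    using sym_x js \<sigma> by (intro sum.cong refl) (simp add: perm_idx_list_update symmetric_tensor_def)
  moreover have "\<dots> = (\<Sum>m<r. \<Sum>l\<in>UNIV. \<Gamma> x i (js ! m) l * T x (js[m := l]))"
    using sum.permute[OF \<sigma>, of "\<lambda>m. \<Sum>l\<in>UNIV. \<Gamma> x i (js ! m) l * T x (js[m := l])"] by simp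
  ultimately show "cov_deriv \<Gamma> T x i (perm_idx r \<sigma> js) = cov_deriv \<Gamma> T x i js"
    using js by (simp add: cov_deriv_def)
qed

lemma tensor_poly_cov_deriv_Sym_square:
  fixes A :: "real^'n \<Rightarrow> 'n list \<Rightarrow> real"
  assumes A_diff: "\<And>js. (\<lambda>t. A (x + t *\<^sub>R axis i 1) js) differentiable (at 0)"
  shows "tensor_poly (2 * k) (cov_deriv \<Gamma> (\<lambda>y. Sym (2 * k) (tensor_prod k (A y) (A y))) x i) v
       = 2 * tensor_poly k (A x) v * tensor_poly k (cov_deriv \<Gamma> A x i) v"
proof -
  define S where "S = (\<lambda>y. Sym (2 * k) (tensor_prod k (A y) (A y)))"
  define w where "w = (\<chi> l. \<Sum>a\<in>UNIV. \<Gamma> x i a l * v $ a)"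
  have "(\<lambda>t. S (x + t *\<^sub>R axis i 1) js) differentiable (at 0)" for js
    unfolding S_def Sym_def tensor_prod_def
    by (rule differentiable_mult[OF differentiable_const differentiable_sum])
       (auto simp: finite_permutations intro!: differentiable_mult A_diff)
  then have dS: "((\<lambda>t. tensor_poly (2 * k) (S (x + t *\<^sub>R axis i 1)) v) has_real_derivative
      tensor_poly (2 * k) (cov_deriv \<Gamma> S x i) v + tensor_poly_deriv (2 * k) (S x) v w) (at 0)"
    unfolding w_def by (rule tensor_poly_cov_deriv_has_real_derivative)
  have "((\<lambda>t. tensor_poly k (A (x + t *\<^sub>R axis i 1)) v) has_real_derivative
      tensor_poly k (cov_deriv \<Gamma> A x i) v + tensor_poly_deriv k (A x) v w) (at 0)"
    unfolding w_def by (rule tensor_poly_cov_deriv_has_real_derivative) (rule A_diff)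
  from DERIV_power[OF this, where n=2]
  have dS':  "((\<lambda>t. tensor_poly (2 * k) (S (x + t *\<^sub>R axis i 1)) v) has_real_derivative
      2 * tensor_poly k (A x) v * (tensor_poly k (cov_deriv \<Gamma> A x i) v + tensor_poly_deriv k (A x) v w)) (at 0)"
    unfolding S_def tensor_poly_Sym_square by (simp add: mult_ac)
  from DERIV_unique[OF dS dS']
  have "tensor_poly (2 * k) (cov_deriv \<Gamma> S x i) v + tensor_poly_deriv (2 * k) (S x) v w
      = 2 * tensor_poly k (A x) v * (tensor_poly k (cov_deriv \<Gamma> A x i) v + tensor_poly_deriv k (A x) v w)" .
  then show ?thesis
    unfolding S_def tensor_poly_deriv_Sym_square by (simp add: algebra_simps)
qed

theorem mainTheorem5:
  fixes U :: "(real^'n) set"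
    and \<Gamma> :: "real^'n \<Rightarrow> 'n \<Rightarrow> 'n \<Rightarrow> 'n \<Rightarrow> real"
    and A :: "real^'n \<Rightarrow> 'n list \<Rightarrow> real"
    and k :: nat
  assumes "open U"
    and A_C2: "\<And>js. C2_on U (\<lambda>x. A x js)"
    and A_sym: "\<And>x. x \<in> U \<Longrightarrow> symmetric_tensor k (A x)"
    and A_nonvanishing: "\<And>x. x \<in> U \<Longrightarrow> \<exists>js. length js = k \<and> A x js \<noteq> 0"
    and par: "\<And>x i js. x \<in> U \<Longrightarrow> length js = 2 * k \<Longrightarrow>
              cov_deriv \<Gamma> (\<lambda>y. Sym (2 * k) (tensor_prod k (A y) (A y))) x i js = 0"
  shows "\<forall>x\<in>U. \<forall>i js. length js = k \<longrightarrow> cov_deriv \<Gamma> A x i js = 0"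
proof (intro ballI allI impI)
  fix x i and js :: "'n list"
  assume x: "x \<in> U" and js: "length js = k"
  have A_diff: "(\<lambda>t. A (x + t *\<^sub>R axis i 1) ks) differentiable (at 0)" for ks
    by (rule differentiable_along_line, rule C2_on_imp_differentiable[OF A_C2 x])
  have "eventually (\<lambda>y. symmetric_tensor k (A y)) (nhds x)"
    using eventually_nhds_in_open[OF \<open>open U\<close> x] by (rule eventually_mono) (rule A_sym)
  then have sym_cov: "symmetric_tensor k (cov_deriv \<Gamma> A x i)"
    by (rule symmetric_tensor_cov_deriv)
  have "tensor_poly k (A x) v * tensor_poly k (cov_deriv \<Gamma> A x i) v = 0" for v
  proof -
    have "tensor_poly (2 * k) (cov_deriv \<Gamma> (\<lambda>y. Sym (2 * k) (tensor_prod k (A y) (A y))) x i) v = 0"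
      by (rule tensor_apply_eq_0) (rule par[OF x])
    then show ?thesis
      using tensor_poly_cov_deriv_Sym_square[OF A_diff] by simp
  qed
  moreover obtain ks where "length ks = k" "A x ks \<noteq> 0"
    using A_nonvanishing[OF x] by blast
  ultimately show "cov_deriv \<Gamma> A x i js = 0"
    using symmetric_tensor_eq_0_if_poly_product_vanishes[OF A_sym[OF x] _ _ sym_cov _ js] by blast
qed


end
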